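(* Let $w=(w_1,\dots,w_n)$ be a random vector with i.i.d. symmetrically distributed components having finite moments $\mathbb{E}[w_1^m]=c_m$ ($c_0=1$, $c_1=0$). Let $m_1,\dots,m_l$ and $n_1,\dots,n_l$ be non-negative integers with $\sum_i m_i$ and $\sum_i n_i$ even and $m_i\ge n_i$ for all $i\in[l]$, and let $z\in\{0,1\}$ be a random binary variable with $P(z=1\mid w)=1-P(z=1\mid -w)$. Then $$\mathbb{E}\Big[\prod_{i=1}^l\frac{w_i^{m_i}}{w_i^{n_i}}\,z\Big]=\frac{\prod_{i=1}^l c_{m_i-n_i}}{2}.$$ *)

theory Defs
  imports "HOL-Probability.Probability"
begin

end

theory Submission
  imports Defs
begin

text \<open>
  Write \<open>W\<close> for the vector \<open>(w\<^sub>1, \<dots>, w\<^sub>n)\<close> and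
  \<open>F(v) = \<Prod>\<^sub>i v\<^sub>i\<^bsup>m\<^sub>i - k\<^sub>i\<^esup>\<close>.
  Conditioning on \<open>W\<close> replaces \<open>z\<close> by \<open>p(W)\<close>, so the left-hand side is \<open>E[p(W) F(W)]\<close>.
  Independence and symmetry of the components make \<open>-W\<close> equidistributed with \<open>W\<close>,
  and \<open>F(-W) = F(W)\<close> because the total exponent is even. Hence
  \<open>E[p(W) F(W)] = E[p(-W) F(W)] = E[(1 - p(W)) F(W)]\<close>, i.e. \<open>E[p(W) F(W)] = E[F(W)] / 2\<close>,
  and \<open>E[F(W)]\<close> factors into moments of \<open>w\<^sub>1\<close> by independence.
\<close>

lemma prod_power_uminus_if_even_sum:
  fixes x :: "'i \<Rightarrow> 'a::comm_ring_1"
  assumes "even (\<Sum>i\<in>A. d i)"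
  shows "(\<Prod>i\<in>A. (- x i) ^ d i) = (\<Prod>i\<in>A. x i ^ d i)"
proof -
  have "(- x i) ^ d i = (-1) ^ d i * x i ^ d i" for i
    by (rule power_minus)
  then have "(\<Prod>i\<in>A. (- x i) ^ d i) = (\<Prod>i\<in>A. (-1) ^ d i) * (\<Prod>i\<in>A. x i ^ d i)"
    by (simp add: prod.distrib)
  also have "\<dots> = (-1) ^ (\<Sum>i\<in>A. d i) * (\<Prod>i\<in>A. x i ^ d i)"
    by (simp only: power_sum)
  finally show ?thesis
    using assms by simp
qed

lemma distr_comp_eq_if_distr_eq:
  assumes [measurable]: "X \<in> measurable M N" "Y \<in> measurable M N" "f \<in> measurable N K"
    and "distr M N X = distr M N Y"
  shows "distr M K (\<lambda>x. f (X x)) = distr M K (\<lambda>x. f (Y x))"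
proof -
  have "distr M K (\<lambda>x. f (X x)) = distr (distr M N X) K f"
    by (subst distr_distr) (auto simp: o_def)
  also have "\<dots> = distr M K (\<lambda>x. f (Y x))"
    unfolding \<open>distr M N X = distr M N Y\<close> by (subst distr_distr) (auto simp: o_def)
  finally show ?thesis .
qed

lemma
  fixes f :: "'b \<Rightarrow> 'c::{banach, second_countable_topology}"
  assumes [measurable]: "X \<in> measurable M N" "Y \<in> measurable M N" "f \<in> borel_measurable N"
    and eq: "distr M N X = distr M N Y"
  shows integrable_comp_iff_if_distr_eq:
      "integrable M (\<lambda>x. f (X x)) \<longleftrightarrow> integrable M (\<lambda>x. f (Y x))"
    and integral_comp_eq_if_distr_eq:
      "(\<integral>x. f (X x) \<partial>M) = (\<integral>x. f (Y x) \<partial>M)"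
  using integrable_distr_eq[of X M N f] integrable_distr_eq[of Y M N f]
    integral_distr[of X M N f] integral_distr[of Y M N f]
  by (simp_all add: eq)

lemma distr_uminus_eq_if_distr_eq:
  fixes X Y :: "'a \<Rightarrow> real"
  assumes [measurable]: "X \<in> borel_measurable M" "Y \<in> borel_measurable M"
    and same_distr: "distr M borel X = distr M borel Y"
    and symmetric: "distr M borel (\<lambda>x. - Y x) = distr M borel Y"
  shows "distr M borel (\<lambda>x. - X x) = distr M borel X"
proof -
  have "distr M borel (\<lambda>x. - X x) = distr M borel (\<lambda>x. - Y x)"
    using same_distr by (intro distr_comp_eq_if_distr_eq[where f=uminus]) auto
  with symmetric same_distr show ?thesis
    by simp
qed

lemma (in prob_space) distr_uminus_restrict_eq_if_indep_symmetric:
  fixes X :: "'i \<Rightarrow> 'a \<Rightarrow> real"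
  assumes indep: "indep_vars (\<lambda>_. borel) X I"
    and symmetric: "\<And>i. i \<in> I \<Longrightarrow> distr M borel (\<lambda>x. - X i x) = distr M borel (X i)"
  shows "distr M (PiM I (\<lambda>_. borel)) (\<lambda>x. \<lambda>i\<in>I. - X i x)
       = distr M (PiM I (\<lambda>_. borel)) (\<lambda>x. \<lambda>i\<in>I. X i x)"
proof (cases "I = {}")
  case False
  have [measurable]: "i \<in> I \<Longrightarrow> random_variable borel (X i)" for i
    using indep by (simp add: indep_vars_def)
  have indep_uminus: "indep_vars (\<lambda>_. borel) (\<lambda>i x. - X i x) I"
    using indep by (rule indep_vars_compose2) simp
  have "distr M (PiM I (\<lambda>_. borel)) (\<lambda>x. \<lambda>i\<in>I. - X i x)
      = PiM I (\<lambda>i. distr M borel (\<lambda>x. - X i x))"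
    by (rule indep_vars_iff_distr_eq_PiM'[THEN iffD1, OF False _ indep_uminus]) simp
  also have "\<dots> = PiM I (\<lambda>i. distr M borel (X i))"
    using symmetric by (intro PiM_cong) auto
  also have "\<dots> = distr M (PiM I (\<lambda>_. borel)) (\<lambda>x. \<lambda>i\<in>I. X i x)"
    by (rule sym, rule indep_vars_iff_distr_eq_PiM'[THEN iffD1, OF False _ indep]) simp
  finally show ?thesis .
next
  case True
  then have "(\<lambda>x. \<lambda>i\<in>I. - X i x) = (\<lambda>x. \<lambda>i\<in>I. X i x)"
    by (simp add: restrict_def)
  then show ?thesis
    by (simp only:)
qed

lemma (in finite_measure) distr_density_eq_if_cond_prob:
  assumes [measurable]: "X \<in> measurable M N" "z \<in> borel_measurable M" "p \<in> borel_measurable N"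
    and z01: "\<And>x. x \<in> space M \<Longrightarrow> z x \<in> {0, 1}"
    and p01: "\<And>v. v \<in> space N \<Longrightarrow> 0 \<le> p v \<and> p v \<le> 1"
    and cond_prob: "\<And>B. B \<in> sets N \<Longrightarrow>
      measure M {x \<in> space M. z x = 1 \<and> X x \<in> B} = (\<integral>x. indicator B (X x) * p (X x) \<partial>M)"
  shows "distr (density M (\<lambda>x. ennreal (z x))) N X = distr (density M (\<lambda>x. ennreal (p (X x)))) N X"
proof (rule measure_eqI)
  fix B assume "B \<in> sets (distr (density M (\<lambda>x. ennreal (z x))) N X)"
  then have [measurable]: "B \<in> sets N"
    by simp
  have pX01: "0 \<le> p (X x) \<and> p (X x) \<le> 1" if "x \<in> space M" for x
    using p01 measurable_space[OF assms(1) that] by blast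
  have "emeasure (distr (density M (\<lambda>x. ennreal (z x))) N X) B
      = (\<integral>\<^sup>+x. ennreal (z x) * indicator (X -` B \<inter> space M) x \<partial>M)"
    by (simp add: emeasure_distr emeasure_density)
  also have "\<dots> = (\<integral>\<^sup>+x. indicator {x \<in> space M. z x = 1 \<and> X x \<in> B} x \<partial>M)"
  proof (rule nn_integral_cong)
    fix x assume "x \<in> space M"
    with z01[of x] show "ennreal (z x) * indicator (X -` B \<inter> space M) x
        = indicator {x \<in> space M. z x = 1 \<and> X x \<in> B} x"
      by (cases "z x = 1") (auto split: split_indicator)
  qed
  also have "\<dots> = emeasure M {x \<in> space M. z x = 1 \<and> X x \<in> B}"
    by (rule nn_integral_indicator) measurable
  also have "\<dots> = ennreal (\<integral>x. indicator B (X x) * p (X x) \<partial>M)"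
    by (simp add: emeasure_eq_measure cond_prob)
  also have "\<dots> = (\<integral>\<^sup>+x. ennreal (indicator B (X x) * p (X x)) \<partial>M)"
  proof (rule nn_integral_eq_integral[symmetric])
    show "integrable M (\<lambda>x. indicator B (X x) * p (X x))"
      by (rule integrable_const_bound[where B=1]) (auto simp: pX01 split: split_indicator)
  qed (auto simp: pX01)
  also have "\<dots> = (\<integral>\<^sup>+x. ennreal (p (X x)) * indicator (X -` B \<inter> space M) x \<partial>M)"
    by (intro nn_integral_cong) (auto split: split_indicator)
  also have "\<dots> = emeasure (distr (density M (\<lambda>x. ennreal (p (X x)))) N X) B"
    by (simp add: emeasure_distr emeasure_density)
  finally show "emeasure (distr (density M (\<lambda>x. ennreal (z x))) N X) B
      = emeasure (distr (density M (\<lambda>x. ennreal (p (X x)))) N X) B" .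
qed simp

lemma (in finite_measure) integral_mult_eq_integral_cond_prob:
  fixes g :: "'b \<Rightarrow> real"
  assumes [measurable]: "X \<in> measurable M N" "z \<in> borel_measurable M" "p \<in> borel_measurable N"
      "g \<in> borel_measurable N"
    and z01: "\<And>x. x \<in> space M \<Longrightarrow> z x \<in> {0, 1}"
    and p01: "\<And>v. v \<in> space N \<Longrightarrow> 0 \<le> p v \<and> p v \<le> 1"
    and cond_prob: "\<And>B. B \<in> sets N \<Longrightarrow>
      measure M {x \<in> space M. z x = 1 \<and> X x \<in> B} = (\<integral>x. indicator B (X x) * p (X x) \<partial>M)"
  shows "(\<integral>x. g (X x) * z x \<partial>M) = (\<integral>x. p (X x) * g (X x) \<partial>M)"
proof -
  have "AE x in M. 0 \<le> z x"
    using z01 by (intro AE_I2) fastforce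
  then have "(\<integral>x. g (X x) * z x \<partial>M) = integral\<^sup>L (density M (\<lambda>x. ennreal (z x))) (\<lambda>x. g (X x))"
    by (subst integral_density) (auto simp: mult.commute)
  also have "\<dots> = integral\<^sup>L (distr (density M (\<lambda>x. ennreal (z x))) N X) g"
    by (simp add: integral_distr)
  also have "\<dots> = integral\<^sup>L (distr (density M (\<lambda>x. ennreal (p (X x)))) N X) g"
    by (simp add: distr_density_eq_if_cond_prob[OF assms(1-3) z01 p01 cond_prob])
  also have "\<dots> = integral\<^sup>L (density M (\<lambda>x. ennreal (p (X x)))) (\<lambda>x. g (X x))"
    by (simp add: integral_distr)
  also have "\<dots> = (\<integral>x. p (X x) * g (X x) \<partial>M)"
    using p01 measurable_space[OF assms(1)] by (subst integral_density) auto
  finally show ?thesis .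
qed

lemma integral_mult_half_if_complementary:
  fixes F p :: "'b \<Rightarrow> real"
  assumes [measurable]: "X \<in> measurable M N" "Y \<in> measurable M N" "p \<in> borel_measurable N"
      "F \<in> borel_measurable N"
    and same_distr: "distr M N X = distr M N Y"
    and p01: "\<And>v. v \<in> space N \<Longrightarrow> 0 \<le> p v \<and> p v \<le> 1"
    and F_integrable: "integrable M (\<lambda>x. F (X x))"
    and F_invariant: "\<And>x. x \<in> space M \<Longrightarrow> F (Y x) = F (X x)"
    and complementary: "AE x in M. p (X x) = 1 - p (Y x)"
  shows "(\<integral>x. p (X x) * F (X x) \<partial>M) = (\<integral>x. F (X x) \<partial>M) / 2"
proof -
  have pY_integrable: "integrable M (\<lambda>x. p (Y x) * F (X x))"
  proof (rule Bochner_Integration.integrable_bound[OF F_integrable])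
    show "AE x in M. norm (p (Y x) * F (X x)) \<le> norm (F (X x))"
      using p01 measurable_space[OF assms(2)]
      by (auto simp: abs_mult intro!: mult_left_le_one_le)
  qed measurable
  have by_symmetry: "(\<integral>x. p (Y x) * F (X x) \<partial>M) = (\<integral>x. p (X x) * F (X x) \<partial>M)"
  proof -
    have "(\<integral>x. p (Y x) * F (X x) \<partial>M) = (\<integral>x. p (Y x) * F (Y x) \<partial>M)"
      using F_invariant by (intro Bochner_Integration.integral_cong) auto
    also have "\<dots> = (\<integral>x. p (X x) * F (X x) \<partial>M)"
      using same_distr by (intro integral_comp_eq_if_distr_eq[symmetric]) auto
    finally show ?thesis .
  qed
  have "(\<integral>x. p (X x) * F (X x) \<partial>M) = (\<integral>x. F (X x) - p (Y x) * F (X x) \<partial>M)"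
    using complementary
    by (intro integral_cong_AE) (auto elim!: eventually_mono simp: left_diff_distrib)
  also have "\<dots> = (\<integral>x. F (X x) \<partial>M) - (\<integral>x. p (X x) * F (X x) \<partial>M)"
    using F_integrable pY_integrable by_symmetry by simp
  finally show ?thesis
    by simp
qed

lemma (in prob_space)
  fixes w :: "'i \<Rightarrow> 'a \<Rightarrow> real" and Y :: "'a \<Rightarrow> real"
  assumes "finite J" and indep: "indep_vars (\<lambda>_. borel) w J"
    and [measurable]: "Y \<in> borel_measurable M"
    and same_distr: "\<And>i. i \<in> J \<Longrightarrow> distr M borel (w i) = distr M borel Y"
    and moments: "\<And>j. integrable M (\<lambda>x. Y x ^ j)"
  shows integrable_prod_powers_iid: "integrable M (\<lambda>x. \<Prod>i\<in>J. w i x ^ d i)"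
    and integral_prod_powers_iid: "(\<integral>x. (\<Prod>i\<in>J. w i x ^ d i) \<partial>M) = (\<Prod>i\<in>J. \<integral>x. Y x ^ d i \<partial>M)"
proof -
  have [measurable]: "i \<in> J \<Longrightarrow> w i \<in> borel_measurable M" for i
    using indep by (simp add: indep_vars_def)
  have indep_powers: "indep_vars (\<lambda>_. borel) (\<lambda>i x. w i x ^ d i) J"
    using indep by (rule indep_vars_compose2) simp
  have integrable_powers: "integrable M (\<lambda>x. w i x ^ d i)" if "i \<in> J" for i
    using that moments integrable_comp_iff_if_distr_eq[OF _ _ _ same_distr, of i "\<lambda>y. y ^ d i"]
    by simp
  then show "integrable M (\<lambda>x. \<Prod>i\<in>J. w i x ^ d i)"
    by (rule indep_vars_integrable[OF \<open>finite J\<close> indep_powers])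
  have "(\<integral>x. w i x ^ d i \<partial>M) = (\<integral>x. Y x ^ d i \<partial>M)" if "i \<in> J" for i
    using that by (intro integral_comp_eq_if_distr_eq[OF _ _ _ same_distr]) auto
  then show "(\<integral>x. (\<Prod>i\<in>J. w i x ^ d i) \<partial>M) = (\<Prod>i\<in>J. \<integral>x. Y x ^ d i \<partial>M)"
    using integrable_powers
    by (simp add: indep_vars_lebesgue_integral[OF \<open>finite J\<close> indep_powers])
qed

theorem proposition2:
  fixes M :: "'a measure" and n l :: nat and w :: "nat \<Rightarrow> 'a \<Rightarrow> real"
    and z :: "'a \<Rightarrow> real" and p :: "(nat \<Rightarrow> real) \<Rightarrow> real"
    and m k :: "nat \<Rightarrow> nat"
  assumes "prob_space M" and "1 \<le> n" and "l \<le> n"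
    and "\<forall>i<n. w i \<in> borel_measurable M"
    and "prob_space.indep_vars M (\<lambda>_. borel) w {..<n}"
    and "\<forall>i<n. distr M borel (w i) = distr M borel (w 0)"
    and "distr M borel (\<lambda>x. - w 0 x) = distr M borel (w 0)"
    and "\<forall>j. integrable M (\<lambda>x. w 0 x ^ j)"
    and "z \<in> borel_measurable M" and "\<forall>x\<in>space M. z x \<in> {0, 1}"
    and "p \<in> borel_measurable (PiM {..<n} (\<lambda>_. borel))"
    and "\<forall>v. 0 \<le> p v \<and> p v \<le> 1"
    and "\<forall>B \<in> sets (PiM {..<n} (\<lambda>_. borel)).
           measure M {x \<in> space M. z x = 1 \<and> (\<lambda>i\<in>{..<n}. w i x) \<in> B}
           = (\<integral>x. indicator B (\<lambda>i\<in>{..<n}. w i x) * p (\<lambda>i\<in>{..<n}. w i x) \<partial>M)"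
    and "AE x in M. p (\<lambda>i\<in>{..<n}. w i x) = 1 - p (\<lambda>i\<in>{..<n}. - w i x)"
    and "even (\<Sum>i<l. m i)" and "even (\<Sum>i<l. k i)" and "\<forall>i<l. k i \<le> m i"
  shows "(\<integral>x. (\<Prod>i<l. w i x ^ (m i - k i)) * z x \<partial>M)
         = (\<Prod>i<l. (\<integral>x. w 0 x ^ (m i - k i) \<partial>M)) / 2"
proof -
  interpret prob_space M by fact
  define N where "N = PiM {..<n} (\<lambda>_. borel :: real measure)"
  define W where "W x = (\<lambda>i\<in>{..<n}. w i x)" for x
  define V where "V x = (\<lambda>i\<in>{..<n}. - w i x)" for x
  define F where "F v = (\<Prod>i<l. v i ^ (m i - k i))" for v :: "nat \<Rightarrow> real"
  have [measurable]: "i < n \<Longrightarrow> w i \<in> borel_measurable M" for i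
    using assms(4) by simp
  have [measurable]: "W \<in> measurable M N" "V \<in> measurable M N"
    unfolding N_def W_def V_def by (auto intro!: measurable_restrict)
  have [measurable]: "p \<in> borel_measurable N"
    using assms(11) by (simp add: N_def)
  have [measurable]: "F \<in> borel_measurable N"
    using assms(3) unfolding F_def N_def
    by (intro borel_measurable_prod borel_measurable_power measurable_component_singleton) auto
  have FW: "F (W x) = (\<Prod>i<l. w i x ^ (m i - k i))" for x
    using assms(3) unfolding F_def W_def by (intro prod.cong) auto
  have FV: "F (V x) = F (W x)" for x
  proof -
    have "even (\<Sum>i<l. m i - k i)"
      using sum_subtractf_nat[of "{..<l}" k m] assms(15-17) by auto
    moreover have "F (V x) = (\<Prod>i<l. (- W x i) ^ (m i - k i))"
      using assms(3) unfolding F_def V_def W_def by (intro prod.cong) auto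
    ultimately show ?thesis
      unfolding F_def by (simp add: prod_power_uminus_if_even_sum)
  qed
  have indep: "indep_vars (\<lambda>_. borel) w {..<n}"
    using assms(5) by simp
  have iid: "distr M borel (w i) = distr M borel (w 0)" if "i < n" for i
    using assms(6) that by blast
  have same_distr: "distr M N W = distr M N V"
  proof -
    have "distr M borel (\<lambda>x. - w i x) = distr M borel (w i)" if "i < n" for i
      using assms(2) that by (intro distr_uminus_eq_if_distr_eq[OF _ _ iid[OF that] assms(7)]) auto
    then show ?thesis
      unfolding N_def W_def V_def
      by (intro distr_uminus_restrict_eq_if_indep_symmetric[OF indep, symmetric]) simp
  qed
  have indep_l: "indep_vars (\<lambda>_. borel) w {..<l}"
    using indep_vars_subset[OF indep] assms(3) by simp
  have iid_l: "distr M borel (w i) = distr M borel (w 0)" if "i \<in> {..<l}" for i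
    using assms(3) that by (intro iid) simp
  have F_integrable: "integrable M (\<lambda>x. F (W x))"
    unfolding FW using assms(2,8)
    by (intro integrable_prod_powers_iid[OF finite_lessThan indep_l _ iid_l]) auto
  have moments: "(\<integral>x. F (W x) \<partial>M) = (\<Prod>i<l. \<integral>x. w 0 x ^ (m i - k i) \<partial>M)"
    unfolding FW using assms(2,8)
    by (intro integral_prod_powers_iid[OF finite_lessThan indep_l _ iid_l]) auto
  have cond_prob: "measure M {x \<in> space M. z x = 1 \<and> W x \<in> B} = (\<integral>x. indicator B (W x) * p (W x) \<partial>M)"
    if "B \<in> sets N" for B
    using assms(13) that unfolding N_def W_def by blast
  have complementary: "AE x in M. p (W x) = 1 - p (V x)"
    using assms(14) unfolding W_def V_def .
  have "(\<integral>x. (\<Prod>i<l. w i x ^ (m i - k i)) * z x \<partial>M) = (\<integral>x. F (W x) * z x \<partial>M)"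
    by (simp add: FW)
  also have "\<dots> = (\<integral>x. p (W x) * F (W x) \<partial>M)"
    using assms(9,10,12) cond_prob
    by (intro integral_mult_eq_integral_cond_prob[where X=W and N=N]) auto
  also have "\<dots> = (\<integral>x. F (W x) \<partial>M) / 2"
    using assms(12) FV same_distr F_integrable complementary
    by (intro integral_mult_half_if_complementary[where X=W and Y=V and N=N]) auto
  finally show ?thesis
    by (simp add: moments)
qed

end
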